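(* Let $L>0$, $\Omega=(-L,L)$, and let $h>0$ be a mesh size with $L/h\in\mathbb{N}$ and $L\ge 4h$. Assume there are continuous functions $f:[-L,L]\times[0,\infty)\to\mathbb{R}$, $g:[0,\infty)\to\mathbb{R}$ and a constant $K>0$ such that (i) $g(0)>0$, $g$ is strictly increasing, and with $G(s):=\int_K^s g(t)\,dt$ one has $\lim_{s\to\infty} \frac{s}{\sqrt{G(s)}}=0$; (ii) $f(x,s)\ge g(s)$ for all $s\ge K$ and all $x\in[-L,L]$. Then there exists a constant $\overline{M}$, independent of the mesh size $h$, such that every non-negative solution $u:\overline{\Omega}_h\to[0,\infty)$ of $$-\Delta_h u(x)=f(x,u(x))\ \ (x\in\Omega_h),\qquad u=0\ \text{on }\partial\Omega_h$$ satisfies $\|u\|_\infty=\max_{x\in\overline{\Omega}_h}|u(x)|\le \overline{M}$.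
   Context: For the mesh size $h>0$: $\mathbb{R}_h=h\mathbb{Z}$, $\overline{\Omega}_h=[-L,L]\cap h\mathbb{Z}$, $\Omega_h=(-L,L)\cap h\mathbb{Z}$, $\partial\Omega_h=\{-L,L\}$. The discrete Laplacian is $\Delta_h u(x)=\frac{u(x+h)-2u(x)+u(x-h)}{h^2}$ for $x\in\Omega_h$. *)

theory Defs
  imports "HOL-Analysis.Analysis"
begin

definition grid_closed :: "real \<Rightarrow> real \<Rightarrow> real set" where
  "grid_closed h L = {x. (\<exists>k::int. x = of_int k * h) \<and> -L \<le> x \<and> x \<le> L}"

definition grid_open :: "real \<Rightarrow> real \<Rightarrow> real set" where
  "grid_open h L = {x. (\<exists>k::int. x = of_int k * h) \<and> -L < x \<and> x < L}"

definition disc_lap :: "real \<Rightarrow> (real \<Rightarrow> real) \<Rightarrow> real \<Rightarrow> real" where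
  "disc_lap h u x = (u (x + h) - 2 * u x + u (x - h)) / h ^ 2"

end

theory Submission
  imports Defs
begin

text \<open>
  Index the grid as \<open>x\<^sub>k = -L + k h\<close>, \<open>0 \<le> k \<le> 2N\<close>. Since \<open>f \<ge> -C\<close>, adding \<open>C h\<^sup>2\<close> times the
  discrete parabola \<open>k (2N - k) / 2\<close> to \<open>u(x\<^sub>k)\<close> gives a discrete superharmonic sequence
  vanishing at both ends, which is the Green potential of a nonnegative density. Comparing the
  Green function with the profile \<open>k (n - k) / n\<close> yields a Harnack inequality: on the middle
  half of the grid, \<open>u\<close> is at least \<open>max u / 8 - C L\<^sup>2 / 2\<close>. There \<open>f(x, u) \<ge> g(u)\<close> is large,
  and the Green representation at the centre gives \<open>u(0) \<ge> L\<^sup>2 g(max u / 8 - C L\<^sup>2 / 2) / 8 - C L\<^sup>2 / 2\<close>.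
  The hypothesis on \<open>G\<close> forces \<open>g\<close> to grow superlinearly, so this contradicts \<open>u(0) \<le> max u\<close>
  once \<open>max u\<close> exceeds a bound depending only on \<open>L\<close>, \<open>C\<close> and \<open>g\<close>, not on \<open>h\<close>.
\<close>

text \<open>\<open>neg_second_diff a k\<close> is \<open>-h\<^sup>2 \<Delta>\<^sub>h\<close> in index coordinates; because \<open>k - 1\<close> is truncated
  subtraction it is only meaningful for \<open>k \<ge> 1\<close>.\<close>

definition neg_second_diff :: "(nat \<Rightarrow> real) \<Rightarrow> nat \<Rightarrow> real" where
  "neg_second_diff a k = 2 * a k - a (k - 1) - a (k + 1)"

lemma neg_second_diff_add_scaled:
  "neg_second_diff (\<lambda>i. a i + c * p i) k = neg_second_diff a k + c * neg_second_diff p k"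
  by (simp add: neg_second_diff_def algebra_simps)

lemma sum_neg_second_diff_telescope:
  fixes a p :: "nat \<Rightarrow> real"
  assumes "m \<ge> 1"
  shows "(\<Sum>k\<in>{1..<m}. neg_second_diff a k * p k - a k * neg_second_diff p k)
     = (a (m - 1) * p m - a m * p (m - 1)) - (a 0 * p 1 - a 1 * p 0)"
  using assms
proof (induction m rule: nat_induct_at_least)
  case base
  then show ?case by simp
next
  case (Suc m)
  have "{1..<Suc m} = insert m {1..<m}" using Suc.hyps by auto
  with Suc show ?case by (simp add: neg_second_diff_def algebra_simps)
qed

lemma sum_neg_second_diff_symmetric:
  fixes a p :: "nat \<Rightarrow> real"
  assumes "a 0 = 0" "a n = 0" "p 0 = 0" "p n = 0"
  shows "(\<Sum>k\<in>{1..<n}. neg_second_diff a k * p k) = (\<Sum>k\<in>{1..<n}. a k * neg_second_diff p k)"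
proof (cases "n = 0")
  case False
  then show ?thesis
    using sum_neg_second_diff_telescope[of n a p] assms by (simp add: sum_subtractf)
qed simp

definition parabola :: "nat \<Rightarrow> nat \<Rightarrow> real" where
  "parabola n i = real i * (real n - real i) / 2"

lemma neg_second_diff_parabola: "k \<ge> 1 \<Longrightarrow> neg_second_diff (parabola n) k = 1"
  by (simp add: neg_second_diff_def parabola_def field_simps)

lemma neg_second_diff_add_parabola:
  "k \<ge> 1 \<Longrightarrow> neg_second_diff (\<lambda>i. a i + c * parabola n i) k = neg_second_diff a k + c"
  by (simp add: neg_second_diff_add_scaled neg_second_diff_parabola)

lemma parabola_boundary: "parabola n 0 = 0" "parabola n n = 0"
  by (simp_all add: parabola_def)

lemma parabola_nonneg: "i \<le> n \<Longrightarrow> 0 \<le> parabola n i"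
  by (simp add: parabola_def)

lemma parabola_le: "parabola n i \<le> real n ^ 2 / 8"
proof -
  have "real n ^ 2 / 8 - parabola n i = (real n - 2 * real i) ^ 2 / 8"
    by (simp add: parabola_def power2_eq_square field_simps)
  then show ?thesis using zero_le_power2[of "real n - 2 * real i"] by linarith
qed

definition green :: "nat \<Rightarrow> nat \<Rightarrow> nat \<Rightarrow> real" where
  "green n j k = real (min j k) * real (n - max j k) / real n"

lemma green_nonneg: "green n j k \<ge> 0"
  by (simp add: green_def)

lemma green_boundary: "green n j 0 = 0" "green n j n = 0"
  by (simp_all add: green_def)

lemma neg_second_diff_green:
  assumes "j \<le> n" "1 \<le> k" "k < n"
  shows "neg_second_diff (green n j) k = (if k = j then 1 else 0)"
proof -
  have n: "real n \<noteq> 0" using assms by simp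
  have k: "real (k - 1) = real k - 1" "real (n - k) = real n - real k"
      "real (n - (k - 1)) = real n - real k + 1" "real (n - (k + 1)) = real n - real k - 1"
    using assms by auto
  consider "k < j" | "k = j" | "j < k" by linarith
  then show ?thesis
  proof cases
    case 1
    then have "min j k = k" "min j (k - 1) = k - 1" "min j (k + 1) = k + 1"
      "max j k = j" "max j (k - 1) = j" "max j (k + 1) = j" by auto
    with 1 k show ?thesis
      by (simp add: neg_second_diff_def green_def diff_divide_distrib[symmetric] algebra_simps)
  next
    case 2
    then have "min j k = k" "min j (k - 1) = k - 1" "min j (k + 1) = k"
      "max j k = k" "max j (k - 1) = k" "max j (k + 1) = k + 1" by auto
    with 2 k n show ?thesis
      by (simp add: neg_second_diff_def green_def diff_divide_distrib[symmetric] algebra_simps)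
  next
    case 3
    then have "min j k = j" "min j (k - 1) = j" "min j (k + 1) = j"
      "max j k = k" "max j (k - 1) = k - 1" "max j (k + 1) = k + 1" by auto
    with 3 k show ?thesis
      by (simp add: neg_second_diff_def green_def diff_divide_distrib[symmetric] algebra_simps)
  qed
qed

lemma green_representation:
  fixes a :: "nat \<Rightarrow> real"
  assumes "a 0 = 0" "a n = 0" "j \<le> n"
  shows "a j = (\<Sum>k\<in>{1..<n}. neg_second_diff a k * green n j k)"
proof -
  have "(\<Sum>k\<in>{1..<n}. neg_second_diff a k * green n j k)
      = (\<Sum>k\<in>{1..<n}. a k * neg_second_diff (green n j) k)"
    using assms by (intro sum_neg_second_diff_symmetric) (simp_all add: green_boundary)
  also have "\<dots> = (\<Sum>k\<in>{1..<n}. if k = j then a k else 0)"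
    using assms by (intro sum.cong) (simp_all add: neg_second_diff_green)
  also have "\<dots> = a j"
    using assms by (cases "j = 0") auto
  finally show ?thesis by simp
qed

lemma green_le_profile:
  assumes "k \<le> n"
  shows "green n j k \<le> real k * real (n - k) / real n"
proof -
  have "real (min j k) * real (n - max j k) \<le> real k * real (n - k)"
    by (intro mult_mono) auto
  then show ?thesis unfolding green_def by (simp add: divide_right_mono)
qed

lemma profile_le_green:
  assumes "j \<le> n" "k \<le> n"
  shows "real (min j (n - j)) / real n * (real k * real (n - k) / real n) \<le> green n j k"
proof (cases "n = 0")
  case False
  have "real (min j (n - j)) * (real k * real (n - k)) \<le> real n * (real (min j k) * real (n - max j k))"
  proof (cases "j \<le> k")
    case True
    have "real (min j (n - j)) * (real k * real (n - k)) \<le> real j * (real n * real (n - k))"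
      by (intro mult_mono) (use assms in auto)
    with True show ?thesis by (simp add: min_def max_def algebra_simps)
  next
    case False
    have "real (min j (n - j)) * (real k * real (n - k)) \<le> real (n - j) * (real k * real n)"
      by (intro mult_mono) (use assms in auto)
    with False show ?thesis by (simp add: min_def max_def algebra_simps)
  qed
  then have "real (min j (n - j)) * (real k * real (n - k)) / (real n * real n)
      \<le> real n * (real (min j k) * real (n - max j k)) / (real n * real n)"
    by (intro divide_right_mono) auto
  with False show ?thesis
    by (simp add: green_def)
qed (simp add: green_def)

lemma green_harnack:
  assumes "j \<le> n" "k \<le> n"
  shows "real (min j (n - j)) / real n * green n m k \<le> green n j k"
  using mult_left_mono[OF green_le_profile[OF assms(2), of m], of "real (min j (n - j)) / real n"]
    profile_le_green[OF assms] by simp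

lemma green_center:
  assumes "k \<le> 2 * N"
  shows "green (2 * N) N k = real (min k (2 * N - k)) / 2"
proof (cases "k \<le> N")
  case True
  then have "min N k = k" "2 * N - max N k = N" "min k (2 * N - k) = k" by auto
  with True show ?thesis by (cases "N = 0") (simp_all add: green_def)
next
  case False
  then have "min N k = N" "min k (2 * N - k) = 2 * N - k" by auto
  then show ?thesis using False by (simp add: green_def max_def)
qed

lemma superharmonic_harnack:
  fixes b :: "nat \<Rightarrow> real"
  assumes "b 0 = 0" "b n = 0" and super: "\<And>k. k \<in> {1..<n} \<Longrightarrow> 0 \<le> neg_second_diff b k"
    and "j \<le> n" "m \<le> n"
  shows "real (min j (n - j)) / real n * b m \<le> b j"
proof -
  have "real (min j (n - j)) / real n * b m
      = (\<Sum>k\<in>{1..<n}. neg_second_diff b k * (real (min j (n - j)) / real n * green n m k))"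
    using green_representation[of b n m] assms by (simp add: sum_distrib_left algebra_simps)
  also have "\<dots> \<le> (\<Sum>k\<in>{1..<n}. neg_second_diff b k * green n j k)"
    using assms by (intro sum_mono mult_left_mono green_harnack) auto
  also have "\<dots> = b j"
    using green_representation[of b n j] assms by simp
  finally show ?thesis .
qed

lemma superharmonic_ge_partial_green_sum:
  fixes b :: "nat \<Rightarrow> real"
  assumes "b 0 = 0" "b n = 0" and super: "\<And>k. k \<in> {1..<n} \<Longrightarrow> 0 \<le> neg_second_diff b k"
    and "j \<le> n" "T \<subseteq> {1..<n}"
  shows "(\<Sum>k\<in>T. neg_second_diff b k * green n j k) \<le> b j"
proof -
  have "(\<Sum>k\<in>T. neg_second_diff b k * green n j k) \<le> (\<Sum>k\<in>{1..<n}. neg_second_diff b k * green n j k)"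
    using assms by (intro sum_mono2) (auto simp: green_nonneg)
  also have "\<dots> = b j"
    using green_representation[of b n j] assms by simp
  finally show ?thesis .
qed

lemma middle_index_bounds:
  fixes N k :: nat
  assumes "N \<ge> 2" "k \<in> {N div 2..<N div 2 + N}"
  shows "k \<in> {1..<2 * N}" "N \<le> 4 * min k (2 * N - k)"
proof -
  have "N \<le> 2 * (N div 2) + 1" by linarith
  with assms show "k \<in> {1..<2 * N}" "N \<le> 4 * min k (2 * N - k)" by auto
qed

lemma superharmonic_middle_ge:
  fixes b :: "nat \<Rightarrow> real"
  assumes "b 0 = 0" "b (2 * N) = 0" and super: "\<And>k. k \<in> {1..<2 * N} \<Longrightarrow> 0 \<le> neg_second_diff b k"
    and "N \<ge> 2" "k \<in> {N div 2..<N div 2 + N}" "m \<le> 2 * N" "0 \<le> b m"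
  shows "b m / 8 \<le> b k"
proof -
  note bounds = middle_index_bounds[OF assms(4,5)]
  have "real N \<le> real (4 * min k (2 * N - k))"
    using bounds(2) by (simp only: of_nat_le_iff)
  then have "real (2 * N) / 8 \<le> real (min k (2 * N - k))"
    by simp
  then have "1 / 8 \<le> real (min k (2 * N - k)) / real (2 * N)"
    using assms(4) by (simp add: le_divide_eq)
  from mult_right_mono[OF this assms(7)]
  have "b m / 8 \<le> real (min k (2 * N - k)) / real (2 * N) * b m" by simp
  also have "\<dots> \<le> b k"
    using bounds(1) by (intro superharmonic_harnack[OF assms(1,2) super _ assms(6)]) auto
  finally show ?thesis .
qed

lemma superharmonic_center_ge:
  fixes b :: "nat \<Rightarrow> real"
  assumes "b 0 = 0" "b (2 * N) = 0" and super: "\<And>k. k \<in> {1..<2 * N} \<Longrightarrow> 0 \<le> neg_second_diff b k"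
    and "N \<ge> 2" and c: "\<And>k. k \<in> {N div 2..<N div 2 + N} \<Longrightarrow> c \<le> neg_second_diff b k"
  shows "real N ^ 2 * c / 8 \<le> b N"
proof -
  let ?T = "{N div 2..<N div 2 + N}"
  have "real N ^ 2 * c / 8 = (\<Sum>k\<in>?T. c * (real N / 8))"
    by (simp add: power2_eq_square)
  also have "\<dots> \<le> (\<Sum>k\<in>?T. neg_second_diff b k * green (2 * N) N k)"
  proof (intro sum_mono mult_mono)
    fix k assume k: "k \<in> ?T"
    note bounds = middle_index_bounds[OF \<open>N \<ge> 2\<close> k]
    show "c \<le> neg_second_diff b k" using c k .
    show "real N / 8 \<le> green (2 * N) N k"
      using bounds by (simp add: green_center)
    show "0 \<le> neg_second_diff b k" using super bounds(1) .
  qed simp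
  also have "\<dots> \<le> b N"
  proof (rule superharmonic_ge_partial_green_sum[where n = "2 * N"])
    show "?T \<subseteq> {1..<2 * N}" using middle_index_bounds(1)[OF \<open>N \<ge> 2\<close>] by blast
  qed (use assms in auto)
  finally show ?thesis .
qed

lemma middle_ge_of_neg_second_diff_ge:
  fixes a :: "nat \<Rightarrow> real"
  assumes bc: "a 0 = 0" "a (2 * N) = 0"
    and lower: "\<And>k. k \<in> {1..<2 * N} \<Longrightarrow> - c \<le> neg_second_diff a k"
    and "c \<ge> 0" "N \<ge> 2" "k \<in> {N div 2..<N div 2 + N}" "m \<le> 2 * N" "0 \<le> a m"
  shows "a m / 8 - c * real N ^ 2 / 2 \<le> a k"
proof -
  define b where "b i = a i + c * parabola (2 * N) i" for i
  have "b 0 = 0" "b (2 * N) = 0"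
    using bc by (simp_all add: b_def parabola_boundary)
  moreover have "0 \<le> neg_second_diff b k" if "k \<in> {1..<2 * N}" for k
    using lower[OF that] that unfolding b_def by (simp add: neg_second_diff_add_parabola)
  moreover have "a m \<le> b m"
    using assms by (simp add: b_def parabola_nonneg)
  moreover have "b k \<le> a k + c * real N ^ 2 / 2"
    using mult_left_mono[OF parabola_le[of "2 * N" k] \<open>c \<ge> 0\<close>] by (simp add: b_def)
  ultimately show ?thesis
    using superharmonic_middle_ge[of b N k m] assms by fastforce
qed

lemma center_ge_of_neg_second_diff_ge:
  fixes a :: "nat \<Rightarrow> real"
  assumes bc: "a 0 = 0" "a (2 * N) = 0"
    and lower: "\<And>k. k \<in> {1..<2 * N} \<Longrightarrow> - c \<le> neg_second_diff a k"
    and "c \<ge> 0" "N \<ge> 2" and middle: "\<And>k. k \<in> {N div 2..<N div 2 + N} \<Longrightarrow> d \<le> neg_second_diff a k"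
  shows "real N ^ 2 * d / 8 - c * real N ^ 2 / 2 \<le> a N"
proof -
  define b where "b i = a i + c * parabola (2 * N) i" for i
  have "b 0 = 0" "b (2 * N) = 0"
    using bc by (simp_all add: b_def parabola_boundary)
  moreover have "0 \<le> neg_second_diff b k" if "k \<in> {1..<2 * N}" for k
    using lower[OF that] that unfolding b_def by (simp add: neg_second_diff_add_parabola)
  moreover have "d \<le> neg_second_diff b k" if "k \<in> {N div 2..<N div 2 + N}" for k
    using middle[OF that] middle_index_bounds(1)[OF \<open>N \<ge> 2\<close> that] \<open>c \<ge> 0\<close>
    unfolding b_def by (simp add: neg_second_diff_add_parabola)
  ultimately have "real N ^ 2 * d / 8 \<le> b N"
    using superharmonic_center_ge[of b N d] \<open>N \<ge> 2\<close> by blast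
  moreover have "b N = a N + c * real N ^ 2 / 2"
    by (simp add: b_def parabola_def power2_eq_square)
  ultimately show ?thesis by simp
qed

lemma superlinear_dirichlet_bound:
  fixes a F :: "nat \<Rightarrow> real" and g :: "real \<Rightarrow> real" and h L C K S :: real
  assumes N: "N \<ge> 2" and h: "h > 0" and L: "L = real N * h" and C: "C \<ge> 0"
    and bc: "a 0 = 0" "a (2 * N) = 0"
    and eq: "\<And>k. k \<in> {1..<2 * N} \<Longrightarrow> neg_second_diff a k = h\<^sup>2 * F k"
    and F_lower: "\<And>k. k \<in> {1..<2 * N} \<Longrightarrow> - C \<le> F k"
    and F_ge_g: "\<And>k. k \<in> {1..<2 * N} \<Longrightarrow> K \<le> a k \<Longrightarrow> g (a k) \<le> F k"
    and g_mono: "mono_on {K..} g"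
    and g_superlinear: "\<And>s. S \<le> s \<Longrightarrow> 64 * s / L\<^sup>2 + 36 * C < g s"
    and j: "j \<le> 2 * N"
  shows "a j \<le> 8 * max S K + 4 * C * L\<^sup>2" (is "_ \<le> ?bound")
proof -
  have lower: "- (C * h\<^sup>2) \<le> neg_second_diff a k" if "k \<in> {1..<2 * N}" for k
    using mult_left_mono[OF F_lower[OF that], of "h\<^sup>2"] eq[OF that] by (simp add: mult.commute)
  have Ch: "0 \<le> C * h\<^sup>2"
    using C by simp
  have scale: "C * h\<^sup>2 * real N ^ 2 = C * L\<^sup>2"
    by (simp add: L power_mult_distrib)
  define M where "M = Max (a ` {..2 * N})"
  have a_le_M: "a i \<le> M" if "i \<le> 2 * N" for i
    using that unfolding M_def by (intro Max_ge) auto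
  obtain m where m: "m \<le> 2 * N" "a m = M"
    using Max_in[of "a ` {..2 * N}"] unfolding M_def by fastforce
  have "M \<le> ?bound"
  proof (rule ccontr)
    assume "\<not> M \<le> ?bound"
    define s where "s = M / 8 - C * L\<^sup>2 / 2"
    have s: "S \<le> s" "K \<le> s" using \<open>\<not> M \<le> ?bound\<close> by (auto simp: s_def)
    have a_middle: "s \<le> a k" if "k \<in> {N div 2..<N div 2 + N}" for k
      using middle_ge_of_neg_second_diff_ge[OF bc lower Ch N that m(1)] a_le_M[of 0] bc m scale
      by (simp add: s_def)
    have "real N ^ 2 * (h\<^sup>2 * g s) / 8 - C * h\<^sup>2 * real N ^ 2 / 2 \<le> a N"
    proof (rule center_ge_of_neg_second_diff_ge[OF bc lower _ N])
      fix k assume k: "k \<in> {N div 2..<N div 2 + N}"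
      note k' = middle_index_bounds(1)[OF N k]
      have "g s \<le> g (a k)"
        using s(2) a_middle[OF k] by (intro mono_onD[OF g_mono]) auto
      also have "\<dots> \<le> F k"
        using F_ge_g[OF k'] s(2) a_middle[OF k] by linarith
      finally show "h\<^sup>2 * g s \<le> neg_second_diff a k"
        using eq[OF k'] by (simp add: mult_left_mono)
    qed (use Ch in auto)
    moreover have "real N ^ 2 * (h\<^sup>2 * g s) = L\<^sup>2 * g s"
      by (simp add: L power_mult_distrib)
    ultimately have upper: "L\<^sup>2 * g s \<le> 8 * M + 4 * C * L\<^sup>2"
      using a_le_M[of N] scale by simp
    have "0 < L\<^sup>2" using N h L by simp
    have "8 * M + 4 * C * L\<^sup>2 = 64 * s + 36 * C * L\<^sup>2"
      by (simp add: s_def)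
    also have "\<dots> = L\<^sup>2 * (64 * s / L\<^sup>2 + 36 * C)"
      using \<open>0 < L\<^sup>2\<close> by (simp add: distrib_left)
    also have "\<dots> < L\<^sup>2 * g s"
      using g_superlinear[OF s(1)] \<open>0 < L\<^sup>2\<close> by (rule mult_strict_left_mono)
    finally show False using upper by simp
  qed
  then show ?thesis using a_le_M[OF j] by simp
qed

lemma integral_mono_on_bounds:
  fixes g :: "real \<Rightarrow> real"
  assumes "continuous_on {a..b} g" "mono_on {a..b} g" "a \<le> b"
  shows "(b - a) * g a \<le> integral {a..b} g" "integral {a..b} g \<le> (b - a) * g b"
proof -
  have g_int: "g integrable_on {a..b}"
    using assms(1) by (rule integrable_continuous_interval)
  have g_bounds: "g a \<le> g t" "g t \<le> g b" if "t \<in> {a..b}" for t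
    using that assms by (auto intro!: mono_onD[OF assms(2)])
  have "integral {a..b} (\<lambda>_. g a) \<le> integral {a..b} g" "integral {a..b} g \<le> integral {a..b} (\<lambda>_. g b)"
    by (rule integral_le; use g_int g_bounds in auto)+
  then show "(b - a) * g a \<le> integral {a..b} g" "integral {a..b} g \<le> (b - a) * g b"
    using assms(3) by simp_all
qed

lemma superlinear_growth:
  fixes g :: "real \<Rightarrow> real" and K A B :: real
  assumes g_cont: "continuous_on {0..} g" and K: "K > 0" and g0: "g 0 > 0"
    and g_mono: "mono_on {0..} g"
    and G_lim: "((\<lambda>s. s / sqrt (integral {K..s} g)) \<longlongrightarrow> 0) at_top"
    and A: "A \<ge> 0"
  shows "\<exists>S. \<forall>s\<ge>S. A * s + B < g s"
proof -
  obtain S1 where S1: "\<And>s. s \<ge> S1 \<Longrightarrow> s / sqrt (integral {K..s} g) < 1 / (A + 1)"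
    using order_tendstoD(2)[OF G_lim, of "1 / (A + 1)"] A by (auto simp: eventually_at_top_linorder)
  have "A * s + B < g s" if s: "s \<ge> max S1 (max (K + 1) (max B 1))" for s
  proof -
    define G where "G = integral {K..s} g"
    have "continuous_on {K..s} g" "mono_on {K..s} g" "K \<le> s"
      using K s by (auto intro: continuous_on_subset[OF g_cont] mono_on_subset[OF g_mono])
    note G_bounds = integral_mono_on_bounds[OF this, folded G_def]
    have "0 < (s - K) * g K"
      using s g0 mono_onD[OF g_mono, of 0 K] K by simp
    then have G_pos: "0 < G"
      using G_bounds(1) by linarith
    have "(s - K) * g s \<le> s * g s"
      using g0 mono_onD[OF g_mono, of 0 s] K s by (intro mult_right_mono) auto
    with G_bounds(2) have G_le: "G \<le> s * g s" by linarith
    have "s < sqrt G / (A + 1)"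
      using S1[of s] s G_pos A by (simp add: G_def field_simps)
    then have "s\<^sup>2 < (sqrt G / (A + 1))\<^sup>2"
      using s by (intro power_strict_mono) auto
    then have "s\<^sup>2 * (A + 1)\<^sup>2 < G"
      using G_pos A by (simp add: power_divide pos_less_divide_eq)
    then have "s * (s * (A + 1)\<^sup>2) < s * g s"
      using G_le by (simp add: power2_eq_square mult_ac)
    then have "s * (A + 1)\<^sup>2 < g s"
      using s by simp
    moreover have "0 \<le> s * (A * A + A)"
      using s A by simp
    then have "A * s + B \<le> s * (A + 1)\<^sup>2"
      using s by (simp add: power2_eq_square algebra_simps)
    ultimately show ?thesis by linarith
  qed
  then show ?thesis by blast
qed

lemma continuous_bounded_below_on_strip:
  fixes f :: "real \<Rightarrow> real \<Rightarrow> real"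
  assumes f_cont: "continuous_on ({a..b} \<times> {0..}) (\<lambda>(x, s). f x s)"
    and f_nonneg: "\<And>x s. x \<in> {a..b} \<Longrightarrow> s \<ge> K \<Longrightarrow> 0 \<le> f x s"
  shows "\<exists>C\<ge>0. \<forall>x\<in>{a..b}. \<forall>s\<ge>0. - C \<le> f x s"
proof -
  have "compact ((\<lambda>(x, s). f x s) ` ({a..b} \<times> {0..K}))"
    by (intro compact_continuous_image continuous_on_subset[OF f_cont] compact_Times) auto
  then obtain B where B: "\<And>x s. x \<in> {a..b} \<Longrightarrow> s \<in> {0..K} \<Longrightarrow> \<bar>f x s\<bar> \<le> B"
    by (fastforce dest: compact_imp_bounded simp: bounded_iff)
  have "- max B 0 \<le> f x s" if "x \<in> {a..b}" "s \<ge> 0" for x s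
    using B[of x s] f_nonneg[of x s] that by (cases "s \<le> K") auto
  then show ?thesis by (intro exI[of _ "max B 0"]) auto
qed

lemma grid_closed_eq_index_image:
  assumes h: "h > 0" and L: "L = real N * h"
  shows "grid_closed h L = (\<lambda>k. - L + real k * h) ` {..2 * N}"
proof (intro set_eqI iffI)
  fix x assume "x \<in> grid_closed h L"
  then obtain z :: int where z: "x = of_int z * h" "- L \<le> x" "x \<le> L"
    by (auto simp: grid_closed_def)
  have "(- real N) * h \<le> of_int z * h" "of_int z * h \<le> real N * h"
    using z L by simp_all
  then have "- real N \<le> of_int z" "of_int z \<le> real N"
    by (auto intro: mult_right_le_imp_le[OF _ h])
  then have "0 \<le> z + int N" "z + int N \<le> int (2 * N)" by linarith+
  moreover have "x = - L + real (nat (z + int N)) * h"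
    using z L \<open>0 \<le> z + int N\<close> by (simp add: algebra_simps)
  ultimately show "x \<in> (\<lambda>k. - L + real k * h) ` {..2 * N}"
    by (intro image_eqI[of _ _ "nat (z + int N)"]) auto
next
  fix x assume "x \<in> (\<lambda>k. - L + real k * h) ` {..2 * N}"
  then obtain k where k: "k \<le> 2 * N" "x = - L + real k * h" by auto
  have "real k * h \<le> real (2 * N) * h"
    using k h by (intro mult_right_mono) auto
  then have "- L \<le> x" "x \<le> L" using k h L by auto
  moreover have "x = of_int (int k - int N) * h" using k L by (simp add: algebra_simps)
  ultimately show "x \<in> grid_closed h L"
    unfolding grid_closed_def by blast
qed

lemma index_in_grid_open:
  assumes h: "h > 0" and L: "L = real N * h" and k: "k \<in> {1..<2 * N}"
  shows "- L + real k * h \<in> grid_open h L"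
proof -
  have "real k * h < real (2 * N) * h" "0 < real k * h"
    using k h by (auto intro: mult_strict_right_mono)
  moreover have "real (2 * N) * h = 2 * L" using L by simp
  ultimately have "- L < - L + real k * h" "- L + real k * h < L" by linarith+
  moreover have "- L + real k * h = of_int (int k - int N) * h" using L by (simp add: algebra_simps)
  ultimately show ?thesis
    unfolding grid_open_def by blast
qed

lemma disc_lap_index:
  assumes "h > 0" "k \<ge> 1"
  shows "neg_second_diff (\<lambda>i. u (x0 + real i * h)) k = h\<^sup>2 * - disc_lap h u (x0 + real k * h)"
proof -
  have shift: "x0 + real k * h + h = x0 + real (k + 1) * h" "x0 + real k * h - h = x0 + real (k - 1) * h"
    using assms by (simp_all add: algebra_simps)
  show ?thesis
    unfolding disc_lap_def neg_second_diff_def shift using assms by simp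
qed

lemma grid_solution_bound:
  fixes f :: "real \<Rightarrow> real \<Rightarrow> real" and g u :: "real \<Rightarrow> real" and h L C K S :: real
  assumes h: "h > 0" and L: "L = real N * h" and N: "N \<ge> 2" and C: "C \<ge> 0"
    and f_lower: "\<And>x s. x \<in> {-L..L} \<Longrightarrow> s \<ge> 0 \<Longrightarrow> - C \<le> f x s"
    and f_ge_g: "\<And>x s. x \<in> {-L..L} \<Longrightarrow> s \<ge> K \<Longrightarrow> g s \<le> f x s"
    and g_mono: "mono_on {K..} g"
    and g_superlinear: "\<And>s. S \<le> s \<Longrightarrow> 64 * s / L\<^sup>2 + 36 * C < g s"
    and u_nonneg: "\<forall>x\<in>grid_closed h L. u x \<ge> 0" and u_bc: "u (-L) = 0" "u L = 0"
    and u_eq: "\<forall>x\<in>grid_open h L. - disc_lap h u x = f x (u x)"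
    and x: "x \<in> grid_closed h L"
  shows "\<bar>u x\<bar> \<le> 8 * max S K + 4 * C * L\<^sup>2"
proof -
  let ?x = "\<lambda>k. - L + real k * h"
  have grid: "grid_closed h L = ?x ` {..2 * N}"
    using grid_closed_eq_index_image[OF h L] .
  then obtain j where j: "j \<le> 2 * N" "x = ?x j" using x by auto
  have on_grid: "?x k \<in> grid_closed h L" if "k \<le> 2 * N" for k
    using that unfolding grid by auto
  have in_interval: "?x k \<in> {-L..L}" if "k \<le> 2 * N" for k
    using on_grid[OF that] by (simp add: grid_closed_def)
  have u_nonneg': "0 \<le> u (?x k)" if "k \<le> 2 * N" for k
    using u_nonneg on_grid[OF that] by blast
  have "u (?x j) \<le> 8 * max S K + 4 * C * L\<^sup>2"
  proof (rule superlinear_dirichlet_bound[OF N h L C, where a = "\<lambda>k. u (?x k)"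
        and F = "\<lambda>k. f (?x k) (u (?x k))" and g = g])
    show "neg_second_diff (\<lambda>k. u (?x k)) k = h\<^sup>2 * f (?x k) (u (?x k))" if "k \<in> {1..<2 * N}" for k
    proof -
      have "neg_second_diff (\<lambda>k. u (?x k)) k = h\<^sup>2 * - disc_lap h u (?x k)"
        using disc_lap_index[OF h, of k u "- L"] that by simp
      also have "\<dots> = h\<^sup>2 * f (?x k) (u (?x k))"
        using u_eq index_in_grid_open[OF h L that] by simp
      finally show ?thesis .
    qed
    show "u (?x (2 * N)) = 0"
      using u_bc L by (simp add: algebra_simps)
  qed (use u_bc L j in_interval u_nonneg' f_lower f_ge_g g_mono g_superlinear in auto)
  with j u_nonneg' show ?thesis by simp
qed

theorem mainTheorem1:
  fixes L K :: real and f :: "real \<Rightarrow> real \<Rightarrow> real" and g :: "real \<Rightarrow> real"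
  assumes L_pos: "L > 0"
    and f_cont: "continuous_on ({-L..L} \<times> {0..}) (\<lambda>(x, s). f x s)"
    and g_cont: "continuous_on {0..} g"
    and K_pos: "K > 0"
    and g0: "g 0 > 0"
    and g_mono: "strict_mono_on {0..} g"
    and G_lim: "((\<lambda>s. s / sqrt (integral {K..s} g)) \<longlongrightarrow> 0) at_top"
    and f_ge_g: "\<And>x s. x \<in> {-L..L} \<Longrightarrow> s \<ge> K \<Longrightarrow> f x s \<ge> g s"
  shows "\<exists>M. \<forall>h u. h > 0 \<longrightarrow> (\<exists>N::nat. L = real N * h) \<longrightarrow> L \<ge> 4 * h \<longrightarrow>
           (\<forall>x\<in>grid_closed h L. u x \<ge> 0) \<longrightarrow> u (-L) = 0 \<longrightarrow> u L = 0 \<longrightarrow>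
           (\<forall>x\<in>grid_open h L. - disc_lap h u x = f x (u x)) \<longrightarrow>
           (\<forall>x\<in>grid_closed h L. \<bar>u x\<bar> \<le> M)"
proof -
  have g_mono': "mono_on {0..} g"
    using g_mono by (rule strict_mono_on_imp_mono_on)
  have f_nonneg: "0 \<le> f x s" if "x \<in> {-L..L}" "s \<ge> K" for x s
  proof -
    have "g 0 \<le> g s"
      using K_pos that by (intro mono_onD[OF g_mono']) auto
    with f_ge_g[OF that] g0 show ?thesis by linarith
  qed
  obtain C where C: "C \<ge> 0" and f_lower: "\<forall>x\<in>{-L..L}. \<forall>s\<ge>0. - C \<le> f x s"
    using continuous_bounded_below_on_strip[OF f_cont f_nonneg] by blast
  obtain S where S: "\<And>s. S \<le> s \<Longrightarrow> 64 * s / L\<^sup>2 + 36 * C < g s"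
    using superlinear_growth[OF g_cont K_pos g0 g_mono' G_lim, of "64 / L\<^sup>2" "36 * C"] by auto
  have g_mono_K: "mono_on {K..} g"
    using K_pos by (intro mono_on_subset[OF g_mono']) auto
  show ?thesis
  proof (intro exI[of _ "8 * max S K + 4 * C * L\<^sup>2"] allI impI ballI)
    fix h u x
    assume h: "h > 0" and "\<exists>N::nat. L = real N * h" and "L \<ge> 4 * h"
      and u_nonneg: "\<forall>x\<in>grid_closed h L. u x \<ge> 0" and u_bc: "u (-L) = 0" "u L = 0"
      and u_eq: "\<forall>x\<in>grid_open h L. - disc_lap h u x = f x (u x)"
      and x: "x \<in> grid_closed h L"
    then obtain N :: nat where L: "L = real N * h" by blast
    with h \<open>L \<ge> 4 * h\<close> have N: "N \<ge> 2" by simp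
    show "\<bar>u x\<bar> \<le> 8 * max S K + 4 * C * L\<^sup>2"
      by (rule grid_solution_bound[OF h L N C f_lower[rule_format] f_ge_g g_mono_K S u_nonneg u_bc u_eq x])
  qed
qed

end
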